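(* Identify the vertices of every ordered forest with their preorder traversal labels. Then: (a) For any ordered forest, the labels of a vertex together with all its descendants form a contiguous interval of integers. (b) Let $p\in(0,1]$, $m\in[n]$ and $F\in\mathcal{F}_{\mathrm{ord}}(n)$; let $F\langle m,n\rangle$ be the induced subgraph on the vertices with labels in $[m,n]$, an ordered forest with the inherited orderings, and let $G\in\mathcal{F}_{\mathrm{ord}}(n-m+1)$ be isomorphic to it. For any $G'\in\mathcal{F}_{\mathrm{ord}}(n-m+1)$, the probability that a random Ungar move applied to $F$ produces a forest $F'$ with $F'\langle m,n\rangle\cong G'$ equals the probability that a random Ungar move applied to $G$ produces $G'$. (c) Start from $\hat 1$ (the path on $n$ vertices in which each vertex $i<n$ has unique child $i+1$) and apply a sequence of moves, where at step $t=1,2,\dots$ a set $S_t\subseteq[n]$ of vertices is selected and the selected vertices are operated on in increasing order of label. For each vertex $i$ let $h_i$ be the smallest $t$ with $i\in S_t$. Let $k<l$ be vertices with $h_k>h_l$ and $h_l\ge h_i$ for all $i\in[k+1,l-1]$. Then after $h_l$ steps, $l$ is a child of $k$.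
   Context: An ordered forest is a finite forest of rooted trees with children of each vertex and the trees linearly ordered left to right; $\mathcal{F}_{\mathrm{ord}}(n)$ is the set of such forests on $n$ vertices up to isomorphism. Preorder traversal labels vertices $1,\dots,n$: trees left to right, each vertex before its subtrees, subtrees left to right. Operating on a vertex $v$: if $v$ is a leaf nothing changes; otherwise the rightmost child $v'$ of $v$ (with its subtree) is detached and attached to the parent $w$ of $v$ immediately right of $v$, or, if $v$ is a root, becomes a new tree immediately to the right of the tree of $v$; labels are preserved. A random Ungar move with parameter $p$ on a forest $F$ selects each vertex independently with probability $p$ and operates on the selected vertices in increasing order of label (this is the Ungarian Markov chain on the Tamari lattice realized on $\mathcal{F}_{\mathrm{ord}}(n)$). *)

theory Defs
  imports Complex_Main
begin

text \<open>Encoding of ordered forests on n vertices (up to isomorphism), with vertices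
identified with their preorder labels 1..n.  A forest is encoded by its parent
function P :: nat => nat, where P v = 0 means that v is a root, and P v = 0 for
every v outside 1..n.  Children of a vertex (and the roots) are ordered left to
right by increasing label.  The encoding P of an ordered forest is valid iff
every parent has a smaller label and the labelling is the preorder one, i.e. the
parent of v+1 is v itself, an ancestor of v, or 0 (v+1 is a root).\<close>

definition ford :: "nat \<Rightarrow> (nat \<Rightarrow> nat) set" where
  "ford n = {P. (\<forall>v. v \<notin> {1..n} \<longrightarrow> P v = 0)
              \<and> (\<forall>v\<in>{1..n}. P v < v)
              \<and> (\<forall>v. 1 \<le> v \<and> v < n \<longrightarrow> (\<exists>j. (P ^^ j) v = P (Suc v)))}"

text \<open>Operating on vertex v: the rightmost (largest label) child v' of v gets the
parent of v (0 if v is a root); it is then the sibling immediately right of v.\<close>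

definition children :: "nat \<Rightarrow> (nat \<Rightarrow> nat) \<Rightarrow> nat \<Rightarrow> nat set" where
  "children n P v = {u\<in>{1..n}. P u = v}"

definition operate :: "nat \<Rightarrow> nat \<Rightarrow> (nat \<Rightarrow> nat) \<Rightarrow> (nat \<Rightarrow> nat)" where
  "operate n v P = (if v \<notin> {1..n} \<or> children n P v = {} then P
                    else P(Max (children n P v) := P v))"

definition ungar_apply :: "nat \<Rightarrow> nat set \<Rightarrow> (nat \<Rightarrow> nat) \<Rightarrow> (nat \<Rightarrow> nat)" where
  "ungar_apply n S P = fold (operate n) (sorted_list_of_set S) P"

definition ungar_prob :: "nat \<Rightarrow> real \<Rightarrow> (nat \<Rightarrow> nat) \<Rightarrow> ((nat \<Rightarrow> nat) \<Rightarrow> bool) \<Rightarrow> real" where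
  "ungar_prob n p F Q =
     (\<Sum>S\<in>Pow {1..n}. p ^ card S * (1 - p) ^ (n - card S) *
                      (if Q (ungar_apply n S F) then 1 else 0))"

text \<open>Sibling/root order is inherited, i.e. again by label.\<close>

definition induced :: "(nat \<Rightarrow> nat) \<Rightarrow> nat set \<Rightarrow> (nat \<Rightarrow> nat)" where
  "induced P V = (\<lambda>v. if v \<in> V \<and> P v \<in> V then P v else 0)"

definition of_iso :: "nat set \<Rightarrow> (nat \<Rightarrow> nat) \<Rightarrow> nat set \<Rightarrow> (nat \<Rightarrow> nat) \<Rightarrow> (nat \<Rightarrow> nat) \<Rightarrow> bool" where
  "of_iso V par W par' \<phi> \<longleftrightarrow>
     bij_betw \<phi> V W \<and>
     (\<forall>v\<in>V. par' (\<phi> v) = (if par v = 0 then 0 else \<phi> (par v))) \<and>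
     (\<forall>u\<in>V. \<forall>v\<in>V. par u = par v \<and> u < v \<longrightarrow> \<phi> u < \<phi> v)"

definition hat1 :: "nat \<Rightarrow> (nat \<Rightarrow> nat)" where
  "hat1 n = (\<lambda>v. if v \<in> {2..n} then v - 1 else 0)"

primrec run :: "nat \<Rightarrow> (nat \<Rightarrow> nat set) \<Rightarrow> nat \<Rightarrow> (nat \<Rightarrow> nat)" where
  "run n S 0 = hat1 n"
| "run n S (Suc t) = ungar_apply n (S (Suc t)) (run n S t)"

definition hit :: "(nat \<Rightarrow> nat set) \<Rightarrow> nat \<Rightarrow> nat" where
  "hit S i = (LEAST t. 1 \<le> t \<and> i \<in> S t)"

end

theory Submission
  imports Defs
begin

(* (a) In preorder the parent of v + 1 is v or an ancestor of v. Hence, walking down the labels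
   from a descendant u of a to a, one never leaves the subtree of a: the subtree is an interval.
   (b) Relabelled by x \<mapsto> x - (m - 1), the induced subforest on [m, n] is again a
   preorder-labelled forest, and isomorphic preorder-labelled forests are equal, since an
   isomorphism of ordered forests preserves the preorder. Operating on a vertex below m does not
   change this subforest, and operating on a vertex v \<ge> m acts on it as operating on
   v - (m - 1) acts on G. So the event depends only on the selected vertices in [m, n], and
   summing out the others leaves the distribution of a random move on G.
   (c) Along a run from hat 1, every vertex strictly between a vertex and its parent has been
   operated on, and a vertex never operated on has a parent never operated on. In step h_l, just
   before l is operated on, all of k + 1, ..., l - 1 but neither k nor l have been operated on;
   this forces the parent of l to be k, and the rest of the step leaves it alone because k is
   not selected. *)

section \<open>Ancestors in preorder-labelled forests\<close>

definition parent_fun :: "nat \<Rightarrow> (nat \<Rightarrow> nat) \<Rightarrow> bool" where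
  "parent_fun N P \<longleftrightarrow> (\<forall>v. v \<notin> {1..N} \<longrightarrow> P v = 0) \<and> (\<forall>v\<in>{1..N}. P v < v)"

text \<open>\<open>desc P u a\<close>: a is u or an ancestor of u; the label 0 acts as a common root of all trees.\<close>

definition desc :: "(nat \<Rightarrow> nat) \<Rightarrow> nat \<Rightarrow> nat \<Rightarrow> bool" where
  "desc P u a \<longleftrightarrow> (\<exists>j. (P ^^ j) u = a)"

definition preorder_parents :: "nat \<Rightarrow> (nat \<Rightarrow> nat) \<Rightarrow> bool" where
  "preorder_parents N P \<longleftrightarrow> (\<forall>v\<in>{1..N}. \<forall>u. P v < u \<and> u < v \<longrightarrow> desc P u (P v))"

lemma parent_fun_less: "parent_fun N P \<Longrightarrow> v \<in> {1..N} \<Longrightarrow> P v < v"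
  unfolding parent_fun_def by blast

lemma parent_fun_outside: "parent_fun N P \<Longrightarrow> v \<notin> {1..N} \<Longrightarrow> P v = 0"
  unfolding parent_fun_def by blast

lemma parent_fun_le_pred: "parent_fun N P \<Longrightarrow> P v \<le> v - 1"
  unfolding parent_fun_def by (cases "v \<in> {1..N}") fastforce+

lemma parent_fun_le: "parent_fun N P \<Longrightarrow> P v \<le> v"
  using parent_fun_le_pred[of N P v] by simp

lemma parent_fun_funpow_le: "parent_fun N P \<Longrightarrow> (P ^^ j) u \<le> u - j"
proof (induction j)
  case (Suc j)
  then show ?case using parent_fun_le_pred[OF Suc.prems, of "(P ^^ j) u"] by simp
qed simp

lemma desc_refl [simp]: "desc P u u"
  unfolding desc_def by (rule exI[of _ 0]) simp

lemma desc_parent [simp]: "desc P u (P u)"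
  unfolding desc_def by (rule exI[of _ 1]) simp

lemma desc_parentI: "desc P (P u) a \<Longrightarrow> desc P u a"
  unfolding desc_def by (metis funpow_Suc_right o_apply)

lemma desc_trans: "desc P u a \<Longrightarrow> desc P a b \<Longrightarrow> desc P u b"
  unfolding desc_def by (metis funpow_add o_apply)

lemma desc_cases: "desc P u a \<Longrightarrow> u = a \<or> desc P (P u) a"
  unfolding desc_def by (metis funpow_0 funpow_Suc_right o_apply old.nat.exhaust)

lemma desc_le: "parent_fun N P \<Longrightarrow> desc P u a \<Longrightarrow> a \<le> u"
  unfolding desc_def using parent_fun_funpow_le by (metis diff_le_self le_trans)

lemma desc_zero: "parent_fun N P \<Longrightarrow> desc P u 0"
  unfolding desc_def using parent_fun_funpow_le[of N P u u] by (intro exI[of _ u]) simp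

lemma desc_child:
  assumes "desc P u a" and "u \<noteq> a"
  shows "\<exists>u'. desc P u u' \<and> P u' = a \<and> u' \<noteq> a"
proof -
  obtain j where "(P ^^ j) u = a" using assms(1) unfolding desc_def by blast
  then show ?thesis using assms(2)
  proof (induction j arbitrary: u)
    case (Suc j)
    then have j: "(P ^^ j) (P u) = a" by (metis funpow_Suc_right o_apply)
    show ?case
    proof (cases "P u = a")
      case True
      then show ?thesis using Suc.prems by (intro exI[of _ u]) simp
    next
      case False
      then show ?thesis using Suc.IH[OF j] desc_parentI by blast
    qed
  qed simp
qed

lemma funpow_fun_upd_below:
  assumes "parent_fun N P" and "u < c"
  shows "((P(c := y)) ^^ j) u = (P ^^ j) u"
proof (induction j)
  case (Suc j)
  have "(P ^^ j) u \<noteq> c" using parent_fun_funpow_le[OF assms(1), of j u] assms(2) by simp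
  then show ?case using Suc by simp
qed simp

lemma desc_fun_upd_below: "parent_fun N P \<Longrightarrow> u < c \<Longrightarrow> desc (P(c := y)) u a \<longleftrightarrow> desc P u a"
  unfolding desc_def using funpow_fun_upd_below by presburger

lemma desc_fun_upd_grandparent:
  assumes par: "parent_fun N P" and v: "v \<in> {1..N}" and c: "P c = v"
    and ua: "desc P u a" and av: "a \<noteq> v"
  shows "desc (P(c := P v)) u a"
proof -
  let ?P' = "P(c := P v)"
  have "c \<in> {1..N}" using parent_fun_outside[OF par, of c] c v by auto
  then have vc: "v < c" and Pv: "P v < v" using parent_fun_less[OF par] c v by auto
  obtain j where "(P ^^ j) u = a" using ua unfolding desc_def by blast
  \<comment> \<open>Only the path step c \<rightarrow> v \<rightarrow> P v changes, and it is shortened to c \<rightarrow> P v.\<close>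
  then show ?thesis
  proof (induction j arbitrary: u)
    case (Suc j)
    then have j: "(P ^^ j) (P u) = a" by (metis funpow_Suc_right o_apply)
    show ?case
    proof (cases "u = c")
      case True
      then have "desc P v a" using j c unfolding desc_def by auto
      then have "desc P (P v) a" using desc_cases av by blast
      then have "desc ?P' (?P' c) a" using desc_fun_upd_below[OF par] Pv vc by simp
      then show ?thesis using True desc_parentI by blast
    next
      case False
      then have "?P' u = P u" by simp
      then have "desc ?P' (?P' u) a" using Suc.IH[OF j] by (simp only:)
      then show ?thesis by (rule desc_parentI)
    qed
  qed simp
qed

lemma ford_parent_fun: "P \<in> ford N \<Longrightarrow> parent_fun N P"
  unfolding ford_def parent_fun_def by blast

lemma desc_between:
  assumes P: "P \<in> ford N" and a: "1 \<le> a" "a \<le> w" and u: "desc P u a" "w \<le> u" "u \<le> N"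
  shows "desc P w a"
  using u(2) a(2)
proof (induction rule: inc_induct)
  case (step x)
  have "desc P (Suc x) a" using step by simp
  then have "desc P (P (Suc x)) a" using desc_cases step.prems by fastforce
  moreover have "desc P x (P (Suc x))"
    using P a step.prems step.hyps(2) u(3) unfolding ford_def desc_def by auto
  ultimately show ?case using desc_trans by blast
qed (use u in simp)

lemma ford_iff: "P \<in> ford N \<longleftrightarrow> parent_fun N P \<and> preorder_parents N P"
proof
  assume P: "P \<in> ford N"
  have "desc P u (P v)" if v: "v \<in> {1..N}" and u: "P v < u" "u < v" for u v
  proof (cases "P v = 0")
    case True
    then show ?thesis using desc_zero[OF ford_parent_fun[OF P]] by simp
  next
    case False
    then show ?thesis using desc_between[OF P, of "P v" u v] u v by simp
  qed
  then show "parent_fun N P \<and> preorder_parents N P"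
    using ford_parent_fun[OF P] unfolding preorder_parents_def by blast
next
  assume "parent_fun N P \<and> preorder_parents N P"
  then have par: "parent_fun N P" and pre: "preorder_parents N P" by auto
  have "\<exists>j. (P ^^ j) v = P (Suc v)" if v: "1 \<le> v" "v < N" for v
  proof (cases "P (Suc v) = v")
    case True
    then show ?thesis by (intro exI[of _ 0]) simp
  next
    case False
    moreover have "P (Suc v) < Suc v" using parent_fun_less[OF par] v by simp
    ultimately have "desc P v (P (Suc v))" using pre v unfolding preorder_parents_def by simp
    then show ?thesis unfolding desc_def .
  qed
  then show "P \<in> ford N" using par unfolding ford_def parent_fun_def by blast
qed

lemma descendants_interval:
  assumes P: "P \<in> ford N" and v: "v \<in> {1..N}"
  shows "\<exists>b. {u\<in>{1..N}. desc P u v} = {v..b}"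
proof -
  define D where "D = {u\<in>{1..N}. desc P u v}"
  have "finite D" and "v \<in> D" unfolding D_def using v by auto
  have "D = {v..Max D}"
  proof
    show "D \<subseteq> {v..Max D}"
      using desc_le[OF ford_parent_fun[OF P]] Max_ge[OF \<open>finite D\<close>] unfolding D_def by auto
    have "Max D \<in> D" using Max_in \<open>finite D\<close> \<open>v \<in> D\<close> by blast
    then show "{v..Max D} \<subseteq> D"
      using desc_between[OF P, of v _ "Max D"] v unfolding D_def by auto
  qed
  then show ?thesis unfolding D_def by blast
qed

lemma Max_children:
  assumes "children N P v \<noteq> {}"
  shows "Max (children N P v) \<in> {1..N}" and "P (Max (children N P v)) = v"
    and "\<And>x. x \<in> {1..N} \<Longrightarrow> P x = v \<Longrightarrow> x \<le> Max (children N P v)"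
proof -
  have fin: "finite (children N P v)" unfolding children_def by simp
  have "Max (children N P v) \<in> children N P v" using Max_in[OF fin assms] .
  then show "Max (children N P v) \<in> {1..N}" "P (Max (children N P v)) = v"
    unfolding children_def by auto
  show "x \<le> Max (children N P v)" if "x \<in> {1..N}" "P x = v" for x
    using that Max_ge[OF fin] unfolding children_def by blast
qed

lemma operate_eq_fun_upd:
  "v \<in> {1..N} \<Longrightarrow> children N P v \<noteq> {} \<Longrightarrow>
    operate N v P = P(Max (children N P v) := P v)"
  unfolding operate_def by simp

lemma operate_eq_self: "v \<notin> {1..N} \<or> children N P v = {} \<Longrightarrow> operate N v P = P"
  unfolding operate_def by simp

lemma operate_parent_fun:
  assumes P: "parent_fun N P"
  shows "parent_fun N (operate N v P)"
proof (cases "v \<notin> {1..N} \<or> children N P v = {}")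
  case True
  then show ?thesis using P by (simp add: operate_eq_self)
next
  case False
  define c where "c = Max (children N P v)"
  have c: "c \<in> {1..N}" "P c = v" using Max_children False unfolding c_def by auto
  have "operate N v P = P(c := P v)" using operate_eq_fun_upd False unfolding c_def by blast
  moreover have "P v < v" "v < c" using parent_fun_less[OF P] False c by auto
  ultimately show ?thesis using P c unfolding parent_fun_def by auto
qed

lemma preorder_parents_grandparent:
  assumes pre: "preorder_parents N P" and v: "v \<in> {1..N}" and c: "c \<in> {1..N}" "P c = v"
    and u: "P v < u" "u < c"
  shows "desc P u (P v)"
proof -
  consider "u < v" | "u = v" | "v < u" by linarith
  then show ?thesis
  proof cases
    case 3
    then have "desc P u v" using pre c u unfolding preorder_parents_def by metis
    then show ?thesis using desc_trans desc_parent by blast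
  qed (use pre v u in \<open>auto simp: preorder_parents_def\<close>)
qed

lemma operate_ford:
  assumes F: "P \<in> ford N"
  shows "operate N v P \<in> ford N"
proof (cases "v \<notin> {1..N} \<or> children N P v = {}")
  case True
  then show ?thesis using F by (simp add: operate_eq_self)
next
  case False
  then have v: "v \<in> {1..N}" and ne: "children N P v \<noteq> {}" by auto
  define c where "c = Max (children N P v)"
  have c: "c \<in> {1..N}" "P c = v" "\<And>x. x \<in> {1..N} \<Longrightarrow> P x = v \<Longrightarrow> x \<le> c"
    using Max_children[OF ne] unfolding c_def by auto
  have par: "parent_fun N P" and pre: "preorder_parents N P" using F ford_iff by auto
  define P' where "P' = P(c := P v)"
  have op: "operate N v P = P'" unfolding P'_def c_def using operate_eq_fun_upd v ne by simp
  have pre_desc: "desc P u (P x)" if "x \<in> {1..N}" "P x < u" "u < x" for u x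
    using pre that unfolding preorder_parents_def by blast
  have "desc P' u (P' x)" if x: "x \<in> {1..N}" and u: "P' x < u" "u < x" for x u
  proof (cases "x = c")
    case True
    then have u': "P v < u" "u < c" using u unfolding P'_def by auto
    then have "desc P u (P v)" using preorder_parents_grandparent[OF pre v c(1,2)] by blast
    then show ?thesis using True desc_fun_upd_below[OF par u'(2)] unfolding P'_def by simp
  next
    case False
    then have Px: "P' x = P x" unfolding P'_def by simp
    have ux: "desc P u (P x)" using pre_desc x u Px by simp
    show ?thesis
    proof (cases "P x = v")
      case True
      then have "u < c" using c(3)[OF x] False u by fastforce
      then show ?thesis using ux desc_fun_upd_below[OF par] Px unfolding P'_def by simp
    qed (use desc_fun_upd_grandparent[OF par v c(2) ux] Px in \<open>simp add: P'_def\<close>)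
  qed
  then have "preorder_parents N P'" unfolding preorder_parents_def by blast
  moreover have "parent_fun N P'" using operate_parent_fun[OF par, of v] op by simp
  ultimately show ?thesis using ford_iff op by simp
qed

lemma fold_operate_ford: "P \<in> ford N \<Longrightarrow> fold (operate N) xs P \<in> ford N"
  by (induction xs arbitrary: P) (auto simp: operate_ford)

lemma ungar_apply_ford: "P \<in> ford N \<Longrightarrow> ungar_apply N S P \<in> ford N"
  unfolding ungar_apply_def by (rule fold_operate_ford)

section \<open>Parents along a run from the top element\<close>

text \<open>\<open>Ops\<close> is the set of vertices operated on so far.\<close>

definition operated_invariant :: "nat \<Rightarrow> (nat \<Rightarrow> nat) \<Rightarrow> nat set \<Rightarrow> bool" where
  "operated_invariant N P Ops \<longleftrightarrow> parent_fun N P \<and> 0 \<notin> Ops \<and>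
     (\<forall>c\<in>{1..N}. {P c<..<c} \<subseteq> Ops) \<and> (\<forall>c\<in>{1..N}. c \<notin> Ops \<longrightarrow> P c \<notin> Ops)"

lemma operated_invariant_operate:
  assumes I: "operated_invariant N P Ops" and v: "v \<in> {1..N}"
  shows "operated_invariant N (operate N v P) (insert v Ops)"
proof -
  have par: "parent_fun N P" and O0: "0 \<notin> Ops"
    and gap: "\<And>c. c \<in> {1..N} \<Longrightarrow> {P c<..<c} \<subseteq> Ops"
    and up: "\<And>c. c \<in> {1..N} \<Longrightarrow> c \<notin> Ops \<Longrightarrow> P c \<notin> Ops"
    using I unfolding operated_invariant_def by auto
  have "0 \<notin> insert v Ops" using O0 v by auto
  moreover have "parent_fun N (operate N v P)" using operate_parent_fun[OF par] .
  moreover have "{operate N v P x<..<x} \<subseteq> insert v Ops \<and>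
      (x \<notin> insert v Ops \<longrightarrow> operate N v P x \<notin> insert v Ops)" if x: "x \<in> {1..N}" for x
  proof (cases "children N P v = {}")
    case True
    then have "P x \<noteq> v" using x unfolding children_def by auto
    then show ?thesis using gap[OF x] up[OF x] True by (auto simp: operate_eq_self)
  next
    case False
    define c where "c = Max (children N P v)"
    have c: "c \<in> {1..N}" "P c = v" "\<And>x. x \<in> {1..N} \<Longrightarrow> P x = v \<Longrightarrow> x \<le> c"
      using Max_children[OF False] unfolding c_def by auto
    have op: "operate N v P = P(c := P v)" using operate_eq_fun_upd[OF v False] unfolding c_def .
    show ?thesis
    proof (cases "x = c")
      case True
      \<comment> \<open>The new gap below c is the old gap below v, plus v, plus the old gap below c.\<close>
      have "{P v<..<c} \<subseteq> {P v<..<v} \<union> {v} \<union> {P c<..<c}" using c(2) by auto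
      moreover have "c \<notin> Ops \<Longrightarrow> P v \<notin> Ops" using up c v by blast
      ultimately show ?thesis using True op gap[OF v] gap[OF c(1)] parent_fun_less[OF par v] by auto
    next
      case False
      have "P x \<noteq> v" if "x \<notin> Ops"
      proof
        assume "P x = v"
        then have "x \<in> {P c<..<c}" using parent_fun_less[OF par x] c(2) c(3)[OF x] False by fastforce
        then show False using gap[OF c(1)] that by blast
      qed
      then show ?thesis using op False gap[OF x] up[OF x] by auto
    qed
  qed
  ultimately show ?thesis unfolding operated_invariant_def by blast
qed

lemma operated_invariant_fold:
  "operated_invariant N P Ops \<Longrightarrow> set xs \<subseteq> {1..N} \<Longrightarrow>
    operated_invariant N (fold (operate N) xs P) (Ops \<union> set xs)"
proof (induction xs arbitrary: P Ops)
  case (Cons x xs)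
  then have "operated_invariant N (operate N x P) (insert x Ops)"
    using operated_invariant_operate by simp
  from Cons.IH[OF this] show ?case using Cons.prems(2) by simp
qed simp

lemma operated_invariant_run:
  assumes S: "\<forall>t\<ge>1. S t \<subseteq> {1..n}"
  shows "operated_invariant n (run n S t) (\<Union>s\<in>{1..t}. S s)"
proof (induction t)
  case 0
  show ?case by (auto simp: operated_invariant_def parent_fun_def hat1_def)
next
  case (Suc t)
  have "S (Suc t) \<subseteq> {1..n}" using S by simp
  moreover from this have "finite (S (Suc t))" using finite_subset by blast
  ultimately have "operated_invariant n (run n S (Suc t)) ((\<Union>s\<in>{1..t}. S s) \<union> S (Suc t))"
    using operated_invariant_fold[OF Suc, of "sorted_list_of_set (S (Suc t))"]
    by (simp add: ungar_apply_def)
  moreover have "(\<Union>s\<in>{1..Suc t}. S s) = (\<Union>s\<in>{1..t}. S s) \<union> S (Suc t)"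
    by (auto simp: atLeastAtMostSuc_conv)
  ultimately show ?case by simp
qed

lemma operate_other: "v \<noteq> P x \<Longrightarrow> operate N v P x = P x"
  using Max_children(2)[of N P v] operate_eq_self[of v N P] operate_eq_fun_upd[of v N P]
  by (cases "v \<notin> {1..N} \<or> children N P v = {}") auto

lemma fold_operate_other: "\<forall>v\<in>set xs. v \<noteq> P x \<Longrightarrow> fold (operate N) xs P x = P x"
  by (induction xs arbitrary: P) (auto simp: operate_other)

lemma sorted_filter_less_append:
  fixes l :: "'a::linorder"
  shows "sorted xs \<Longrightarrow> filter (\<lambda>x. x < l) xs @ filter (\<lambda>x. \<not> x < l) xs = xs"
proof (induction xs)
  case (Cons a xs)
  show ?case
  proof (cases "a < l")
    case False
    then have "\<forall>x\<in>set xs. \<not> x < l" using Cons.prems by (auto dest: order.strict_trans2)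
    then show ?thesis using False by (simp add: filter_empty_conv)
  qed (use Cons in simp)
qed simp

lemma hit_is_first:
  assumes "\<exists>t\<ge>1. i \<in> S t"
  shows "1 \<le> hit S i" and "i \<in> S (hit S i)" and "\<And>t. 1 \<le> t \<Longrightarrow> i \<in> S t \<Longrightarrow> hit S i \<le> t"
proof -
  show "1 \<le> hit S i" "i \<in> S (hit S i)"
    unfolding hit_def using LeastI_ex[OF assms] by auto
  show "hit S i \<le> t" if "1 \<le> t" "i \<in> S t" for t
    unfolding hit_def using that by (simp add: Least_le)
qed

lemma operated_invariant_parent:
  assumes I: "operated_invariant N P Ops" and l: "l \<in> {1..N}" "l \<notin> Ops"
    and k: "k < l" "k \<notin> Ops" "{k<..<l} \<subseteq> Ops"
  shows "P l = k"
proof -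
  have "P l \<notin> Ops" "{P l<..<l} \<subseteq> Ops" "P l < l"
    using I l parent_fun_less[of N P l] unfolding operated_invariant_def by auto
  then show ?thesis using k by (metis greaterThanLessThan_iff linorder_neqE_nat subsetD)
qed

lemma ungar_apply_split:
  "ungar_apply n S P =
    fold (operate n) (filter (\<lambda>x. \<not> x < l) (sorted_list_of_set S))
      (fold (operate n) (filter (\<lambda>x. x < l) (sorted_list_of_set S)) P)"
  unfolding ungar_apply_def
  by (metis fold_append comp_apply sorted_filter_less_append sorted_sorted_list_of_set)

lemma run_hit_parent:
  assumes S: "\<forall>t\<ge>1. S t \<subseteq> {1..n}" and l: "l \<in> {1..n}" and kl: "k < l"
    and hits: "\<forall>i\<in>{k..l}. \<exists>t\<ge>1. i \<in> S t"
    and hlk: "hit S l < hit S k" and mid: "\<forall>i\<in>{k+1..l-1}. hit S i \<le> hit S l"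
  shows "run n S (hit S l) l = k"
proof -
  define h where "h = hit S l"
  have h: "1 \<le> h" "l \<in> S h" "\<And>t. 1 \<le> t \<Longrightarrow> l \<in> S t \<Longrightarrow> h \<le> t"
    using hit_is_first[of l S] hits kl unfolding h_def by auto
  have k_late: "k \<notin> S s" if "1 \<le> s" "s \<le> h" for s
    using hit_is_first(3)[of k S s] hits kl hlk that unfolding h_def by fastforce
  obtain h0 where h0: "h = Suc h0" using h(1) by (cases h) auto
  have "finite (S h)" using S h(1) finite_subset by blast
  then have set_S: "set (sorted_list_of_set (S h)) = S h" by simp
  \<comment> \<open>Split step h at l: Q is the forest just before l is operated on.\<close>
  define xs1 where "xs1 = filter (\<lambda>x. x < l) (sorted_list_of_set (S h))"
  define Q where "Q = fold (operate n) xs1 (run n S h0)"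
  define Ops where "Ops = (\<Union>s\<in>{1..h0}. S s) \<union> set xs1"
  have inv: "operated_invariant n Q Ops"
    using operated_invariant_fold[OF operated_invariant_run[OF S, of h0], of xs1] S h(1) set_S
    unfolding Q_def Ops_def xs1_def by auto
  have l_out: "l \<notin> Ops" using h(3) h0 unfolding Ops_def xs1_def by fastforce
  have k_out: "k \<notin> Ops" using k_late h0 set_S unfolding Ops_def xs1_def by fastforce
  have gap: "{k<..<l} \<subseteq> Ops"
  proof
    fix i assume i: "i \<in> {k<..<l}"
    then have "\<exists>t\<ge>1. i \<in> S t" and "hit S i \<le> h" using hits mid unfolding h_def by auto
    then have "1 \<le> hit S i" "i \<in> S (hit S i)" "hit S i \<le> h" using hit_is_first by auto
    then consider "hit S i = h" | "hit S i \<in> {1..h0}" using h0 by fastforce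
    then show "i \<in> Ops" using \<open>i \<in> S (hit S i)\<close> set_S i unfolding Ops_def xs1_def by cases auto
  qed
  define xs2 where "xs2 = filter (\<lambda>x. \<not> x < l) (sorted_list_of_set (S h))"
  have "run n S h = fold (operate n) xs2 Q"
    using ungar_apply_split[of n "S h" "run n S h0" l] h0 unfolding Q_def xs1_def xs2_def by simp
  moreover have "\<forall>v\<in>set xs2. v \<noteq> Q l"
    using operated_invariant_parent[OF inv l l_out kl k_out gap] k_late h(1) set_S
    unfolding xs2_def by auto
  ultimately have "run n S h l = Q l" using fold_operate_other by metis
  then show ?thesis using operated_invariant_parent[OF inv l l_out kl k_out gap] unfolding h_def by simp
qed

section \<open>Isomorphic preorder-labelled forests are equal\<close>

lemma desc_siblings_less:
  assumes P: "P \<in> ford N" and u: "desc P u u'" "u \<le> N" and v: "desc P v v'"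
    and sib: "P u' = P v'" "1 \<le> u'" "u' < v'"
  shows "u < v"
proof (rule ccontr)
  assume "\<not> u < v"
  moreover have "v' \<le> v" using desc_le[OF ford_parent_fun[OF P] v] .
  ultimately have "desc P v' u'" using desc_between[OF P sib(2) _ u(1) _ u(2)] sib(3) by simp
  then have "desc P (P v') u'" using desc_cases sib(3) by blast
  then have "u' \<le> P u'" using desc_le[OF ford_parent_fun[OF P]] sib(1) by simp
  moreover have "u' \<le> N" using desc_le[OF ford_parent_fun[OF P] u(1)] u(2) by simp
  then have "P u' < u'" using parent_fun_less[OF ford_parent_fun[OF P]] sib(2) by simp
  ultimately show False by simp
qed

lemma desc_or_siblings:
  assumes P: "P \<in> ford N" and uv: "u < v" "v \<le> N"
  shows "desc P v u \<or> (\<exists>u' v'. desc P u u' \<and> desc P v v' \<and> P u' = P v' \<and> 1 \<le> u' \<and> u' < v')"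
proof -
  have par: "parent_fun N P" using ford_parent_fun[OF P] .
  define A where "A = {a. desc P u a \<and> desc P v a}"
  have "finite A" using desc_le[OF par] by (intro finite_subset[of A "{..u}"]) (auto simp: A_def)
  moreover have "0 \<in> A" using desc_zero[OF par] unfolding A_def by simp
  ultimately have a: "Max A \<in> A" and a_max: "\<And>b. b \<in> A \<Longrightarrow> b \<le> Max A"
    using Max_in Max_ge by blast+
  let ?a = "Max A"
  show ?thesis
  proof (cases "u = ?a")
    case True
    then show ?thesis using a unfolding A_def by simp
  next
    case False
    have "?a \<le> u" using a desc_le[OF par] unfolding A_def by blast
    then have "v \<noteq> ?a" using uv by simp
    obtain u' where u': "desc P u u'" "P u' = ?a" "u' \<noteq> ?a"
      using desc_child a False unfolding A_def by blast
    obtain v' where v': "desc P v v'" "P v' = ?a" "v' \<noteq> ?a"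
      using desc_child a \<open>v \<noteq> ?a\<close> unfolding A_def by blast
    have "P 0 = 0" using parent_fun_outside[OF par] by simp
    then have "u' \<noteq> 0" "v' \<noteq> 0" using u'(2,3) v'(2,3) by metis+
    have "u' \<le> N" using desc_le[OF par u'(1)] uv by simp
    then have "?a < u'" using parent_fun_less[OF par, of u'] u'(2) \<open>u' \<noteq> 0\<close> by simp
    \<comment> \<open>u' and v' are the children of the last common ancestor on the paths from u and v.\<close>
    then have "u' \<noteq> v'" using a_max[of u'] u'(1) v'(1) unfolding A_def by fastforce
    moreover have "\<not> v' < u'"
      using desc_siblings_less[OF P v'(1) uv(2) u'(1)] u'(2) v'(2) \<open>v' \<noteq> 0\<close> uv(1) by fastforce
    ultimately show ?thesis using u' v' \<open>u' \<noteq> 0\<close> by (metis less_one linorder_neqE_nat not_less)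
  qed
qed

lemma strict_mono_on_self_map_eq:
  fixes f :: "nat \<Rightarrow> nat"
  assumes f: "strict_mono_on {1..N} f" "f ` {1..N} \<subseteq> {1..N}" and v: "v \<in> {1..N}"
  shows "f v = v"
proof -
  have gap: "f i + (j - i) \<le> f j" if "1 \<le> i" "i \<le> j" "j \<le> N" for i j
    using that(2,3)
  proof (induction j rule: dec_induct)
    case (step j)
    then have "f j < f (Suc j)" using that(1) strict_mono_onD[OF f(1), of j "Suc j"] by simp
    then show ?case using step by simp
  qed simp
  have "1 \<in> {1..N}" "N \<in> {1..N}" using v by auto
  then have "f 1 \<ge> 1" "f N \<le> N" using f(2) by (auto simp: image_subset_iff)
  then show ?thesis using gap[of 1 v] gap[of v N] v by auto
qed

lemma desc_commute:
  assumes A: "parent_fun N A" and comm: "\<And>v. v \<le> N \<Longrightarrow> B (\<psi> v) = \<psi> (A v)"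
    and ua: "desc A u a" and u: "u \<le> N"
  shows "desc B (\<psi> u) (\<psi> a)"
proof -
  obtain j where j: "(A ^^ j) u = a" using ua unfolding desc_def by blast
  have "(B ^^ i) (\<psi> u) = \<psi> ((A ^^ i) u)" for i
  proof (induction i)
    case (Suc i)
    have "(A ^^ i) u \<le> N" using parent_fun_funpow_le[OF A, of i u] u by simp
    then show ?case using Suc comm by simp
  qed simp
  then show ?thesis using j unfolding desc_def by blast
qed

lemma of_iso_commute_parent:
  assumes A: "parent_fun N A" and B: "parent_fun N B" and iso: "of_iso {1..N} A {1..N} B \<phi>"
    and v: "v \<le> N"
  shows "B ((\<phi>(0 := 0)) v) = (\<phi>(0 := 0)) (A v)"
proof (cases "v = 0")
  case True
  then show ?thesis using parent_fun_outside[OF A] parent_fun_outside[OF B] by simp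
next
  case False
  then have "v \<in> {1..N}" using v by simp
  moreover from this have "\<phi> v \<noteq> 0" using iso bij_betwE unfolding of_iso_def by fastforce
  ultimately show ?thesis using iso unfolding of_iso_def by auto
qed

lemma of_iso_strict_mono_on:
  assumes A: "A \<in> ford N" and B: "B \<in> ford N" and iso: "of_iso {1..N} A {1..N} B \<phi>"
  shows "strict_mono_on {1..N} \<phi>"
proof (rule strict_mono_onI)
  have parA: "parent_fun N A" and parB: "parent_fun N B" using A B ford_parent_fun by auto
  have \<phi>_range: "\<phi> v \<in> {1..N}" if "v \<in> {1..N}" for v
    using iso bij_betwE that unfolding of_iso_def by blast
  have desc_\<phi>: "desc B (\<phi> u) (\<phi> a)" if "desc A u a" "u \<in> {1..N}" "a \<in> {1..N}" for u a
    using desc_commute[OF parA, of B "\<phi>(0 := 0)", OF of_iso_commute_parent[OF parA parB iso]] that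
    by fastforce
  fix u v assume u: "u \<in> {1..N}" and v: "v \<in> {1..N}" and "u < v"
  consider "desc A v u" | u' v' where "desc A u u'" "desc A v v'" "A u' = A v'" "1 \<le> u'" "u' < v'"
    using desc_or_siblings[OF A \<open>u < v\<close>] v by auto
  then show "\<phi> u < \<phi> v"
  proof cases
    case 1
    then have "\<phi> u \<le> \<phi> v" using desc_\<phi> desc_le[OF parB] u v by blast
    moreover have "\<phi> u \<noteq> \<phi> v"
      using iso u v \<open>u < v\<close> unfolding of_iso_def bij_betw_def inj_on_def by fastforce
    ultimately show ?thesis by simp
  next
    case 2
    moreover have "u' \<le> u" "v' \<le> v" using desc_le[OF parA] 2 by auto
    ultimately have u'v': "u' \<in> {1..N}" "v' \<in> {1..N}" using u v by auto
    then have "B (\<phi> u') = B (\<phi> v')"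
      using of_iso_commute_parent[OF parA parB iso] 2
      by (metis atLeastAtMost_iff fun_upd_apply not_one_le_zero)
    moreover have "\<phi> u' < \<phi> v'" using iso u'v' 2 unfolding of_iso_def by blast
    ultimately show ?thesis
      using desc_siblings_less[OF B] desc_\<phi> 2 u v u'v' \<phi>_range by (meson atLeastAtMost_iff)
  qed
qed

lemma of_iso_ford_eq:
  assumes A: "A \<in> ford N" and B: "B \<in> ford N" and iso: "of_iso {1..N} A {1..N} B \<phi>"
  shows "A = B"
proof
  have parA: "parent_fun N A" and parB: "parent_fun N B" using A B ford_parent_fun by auto
  have "\<phi> ` {1..N} \<subseteq> {1..N}" using iso bij_betw_imp_surj_on unfolding of_iso_def by blast
  then have id: "\<phi> v = v" if "v \<in> {1..N}" for v
    using strict_mono_on_self_map_eq[OF of_iso_strict_mono_on[OF A B iso]] that by blast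
  fix w
  show "A w = B w"
  proof (cases "w \<in> {1..N}")
    case True
    then have "B (\<phi> w) = (if A w = 0 then 0 else \<phi> (A w))" using iso unfolding of_iso_def by blast
    then show ?thesis using id[OF True] id[of "A w"] parent_fun_less[OF parA True] True by auto
  next
    case False
    then show ?thesis using parent_fun_outside[OF parA] parent_fun_outside[OF parB] by simp
  qed
qed

section \<open>The induced subforest on a final interval of labels\<close>

text \<open>The induced subforest on \<open>d + 1, ..., d + N\<close>, relabelled by \<open>x \<mapsto> x - d\<close>.\<close>

definition tail_forest :: "nat \<Rightarrow> nat \<Rightarrow> (nat \<Rightarrow> nat) \<Rightarrow> (nat \<Rightarrow> nat)" where
  "tail_forest d N P = (\<lambda>x. if 1 \<le> x \<and> x \<le> N \<and> d < P (x + d) then P (x + d) - d else 0)"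

lemma parent_fun_tail_forest:
  assumes "parent_fun (N + d) P"
  shows "parent_fun N (tail_forest d N P)"
proof -
  have "P (v + d) - d < v" if "v \<in> {1..N}" for v using parent_fun_less[OF assms, of "v + d"] that by auto
  then show ?thesis unfolding parent_fun_def tail_forest_def by auto
qed

lemma funpow_tail_forest:
  assumes P: "parent_fun (N + d) P" and u: "u \<in> {1..N}" and "d < (P ^^ j) (u + d)"
  shows "(tail_forest d N P ^^ j) u = (P ^^ j) (u + d) - d"
  using assms(3)
proof (induction j)
  case (Suc j)
  have "P ((P ^^ j) (u + d)) \<le> (P ^^ j) (u + d)" using parent_fun_le[OF P] .
  then have dj: "d < (P ^^ j) (u + d)" using Suc.prems by simp
  moreover have "(P ^^ j) (u + d) \<le> u + d" using parent_fun_funpow_le[OF P] by (meson diff_le_self le_trans)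
  ultimately show ?case using Suc u unfolding tail_forest_def by auto
qed simp

lemma tail_forest_ford:
  assumes F: "P \<in> ford (N + d)"
  shows "tail_forest d N P \<in> ford N"
proof -
  have par: "parent_fun (N + d) P" and pre: "preorder_parents (N + d) P" using F ford_iff by auto
  let ?R = "tail_forest d N P"
  have "desc ?R u (?R x)" if x: "x \<in> {1..N}" and u: "?R x < u" "u < x" for x u
  proof (cases "d < P (x + d)")
    case False
    then show ?thesis using desc_zero[OF parent_fun_tail_forest[OF par]] unfolding tail_forest_def by simp
  next
    case True
    then have Rx: "?R x = P (x + d) - d" using x unfolding tail_forest_def by simp
    then have "desc P (u + d) (P (x + d))" using pre x u True unfolding preorder_parents_def by auto
    then obtain j where "(P ^^ j) (u + d) = P (x + d)" unfolding desc_def by blast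
    moreover have "u \<in> {1..N}" using u x by auto
    ultimately have "(?R ^^ j) u = ?R x" using funpow_tail_forest[OF par] True Rx by simp
    then show ?thesis unfolding desc_def by blast
  qed
  then show ?thesis using ford_iff parent_fun_tail_forest[OF par] unfolding preorder_parents_def by blast
qed

lemma tail_forest_operate_low:
  assumes P: "parent_fun (N + d) P" and v: "v \<le> d"
  shows "tail_forest d N (operate (N + d) v P) = tail_forest d N P"
proof (cases "v \<notin> {1..N + d} \<or> children (N + d) P v = {}")
  case False
  define c where "c = Max (children (N + d) P v)"
  have "P c = v" using Max_children(2) False unfolding c_def by blast
  moreover have "operate (N + d) v P = P(c := P v)" using operate_eq_fun_upd False unfolding c_def by blast
  moreover have "P v \<le> v" using parent_fun_le[OF P] .
  ultimately show ?thesis using v unfolding tail_forest_def by (intro ext) auto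
qed (simp add: operate_eq_self)

lemma children_tail_forest:
  assumes P: "parent_fun (N + d) P" and v: "d < v"
  shows "children N (tail_forest d N P) (v - d) = (\<lambda>w. w - d) ` children (N + d) P v"
proof (intro equalityI subsetI)
  fix u assume "u \<in> children N (tail_forest d N P) (v - d)"
  then have "u \<in> {1..N}" "d < P (u + d)" "P (u + d) = v"
    using v unfolding children_def tail_forest_def by (auto split: if_splits)
  then show "u \<in> (\<lambda>w. w - d) ` children (N + d) P v"
    unfolding children_def by (intro image_eqI[of _ _ "u + d"]) auto
next
  fix u assume "u \<in> (\<lambda>w. w - d) ` children (N + d) P v"
  then obtain w where w: "w \<in> {1..N + d}" "P w = v" "u = w - d" unfolding children_def by auto
  then have "d < w" using parent_fun_less[OF P w(1)] v by simp
  then show "u \<in> children N (tail_forest d N P) (v - d)"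
    using w v unfolding children_def tail_forest_def by auto
qed

lemma tail_forest_operate_high:
  assumes P: "parent_fun (N + d) P" and v: "v \<in> {d+1..N + d}"
  shows "tail_forest d N (operate (N + d) v P) = operate N (v - d) (tail_forest d N P)"
proof -
  have v': "v - d \<in> {1..N}" using v by auto
  note ch = children_tail_forest[OF P, of v]
  show ?thesis
  proof (cases "children (N + d) P v = {}")
    case True
    then show ?thesis using ch v by (simp add: operate_eq_self)
  next
    case False
    define c where "c = Max (children (N + d) P v)"
    have c: "c \<in> {1..N + d}" "P c = v" using Max_children[OF False] unfolding c_def by auto
    have "d < c" using parent_fun_less[OF P c(1)] c(2) v by simp
    have "Max (children N (tail_forest d N P) (v - d)) = c - d"
      using ch v False unfolding c_def
      by (auto intro!: mono_Max_commute[symmetric] simp: mono_def children_def)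
    then have "operate N (v - d) (tail_forest d N P) =
        (tail_forest d N P)(c - d := tail_forest d N P (v - d))"
      using operate_eq_fun_upd[OF v'] ch False v by simp
    moreover have "operate (N + d) v P = P(c := P v)"
      using operate_eq_fun_upd False v unfolding c_def by auto
    moreover have "tail_forest d N (P(c := P v)) x =
        ((tail_forest d N P)(c - d := tail_forest d N P (v - d))) x" for x
      using \<open>d < c\<close> c v unfolding tail_forest_def by (cases "x + d = c") auto
    ultimately show ?thesis by auto
  qed
qed

lemma tail_forest_fold_operate:
  assumes "parent_fun (N + d) P" and "set xs \<subseteq> {1..N + d}"
  shows "tail_forest d N (fold (operate (N + d)) xs P) =
         fold (operate N) (map (\<lambda>x. x - d) (filter (\<lambda>x. d < x) xs)) (tail_forest d N P)"
  using assms
proof (induction xs arbitrary: P)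
  case (Cons x xs)
  have IH: "tail_forest d N (fold (operate (N + d)) xs (operate (N + d) x P)) =
      fold (operate N) (map (\<lambda>x. x - d) (filter (\<lambda>x. d < x) xs)) (tail_forest d N (operate (N + d) x P))"
    using Cons.IH[OF operate_parent_fun[OF Cons.prems(1)]] Cons.prems(2) by simp
  show ?case
  proof (cases "d < x")
    case True
    then show ?thesis using IH tail_forest_operate_high[OF Cons.prems(1)] Cons.prems(2) by simp
  next
    case False
    then show ?thesis using IH tail_forest_operate_low[OF Cons.prems(1)] by simp
  qed
qed simp

lemma sorted_list_of_set_shift:
  fixes S :: "nat set"
  assumes "finite S"
  shows "sorted_list_of_set ((\<lambda>x. x - d) ` {x\<in>S. d < x}) =
         map (\<lambda>x. x - d) (filter (\<lambda>x. d < x) (sorted_list_of_set S))"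
proof -
  let ?ys = "map (\<lambda>x. x - d) (filter (\<lambda>x. d < x) (sorted_list_of_set S))"
  have "sorted_wrt (<) (filter (\<lambda>x. d < x) (sorted_list_of_set S))"
    using sorted_wrt_filter strict_sorted_list_of_set by blast
  then have "sorted_wrt (<) ?ys"
    unfolding sorted_wrt_map by (rule sorted_wrt_mono_rel[rotated]) (auto intro: diff_less_mono)
  moreover have "set ?ys = (\<lambda>x. x - d) ` {x\<in>S. d < x}" using assms by auto
  ultimately show ?thesis
    using sorted_list_of_set.idem_if_sorted_distinct by (metis strict_sorted_iff)
qed

lemma tail_forest_ungar_apply:
  assumes "parent_fun (N + d) P" and "S \<subseteq> {1..N + d}"
  shows "tail_forest d N (ungar_apply (N + d) S P) =
         ungar_apply N ((\<lambda>x. x - d) ` {x\<in>S. d < x}) (tail_forest d N P)"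
proof -
  have "finite S" using assms(2) finite_subset by blast
  then show ?thesis
    using tail_forest_fold_operate[OF assms(1), of "sorted_list_of_set S"] assms(2)
    by (simp add: ungar_apply_def sorted_list_of_set_shift)
qed

lemma sum_Pow_Un_marginal:
  fixes p :: "'a::comm_ring_1" and f :: "'b set \<Rightarrow> 'a"
  assumes V: "finite V" and D: "finite D" and VD: "V \<inter> D = {}"
  shows "(\<Sum>S\<in>Pow (V \<union> D). p ^ card S * (1 - p) ^ (card (V \<union> D) - card S) * f (S \<inter> V)) =
         (\<Sum>T\<in>Pow V. p ^ card T * (1 - p) ^ (card V - card T) * f T)"
  using D VD
proof (induction D rule: finite_induct)
  case empty
  show ?case by (intro sum.cong) (auto simp: Int_absorb2)
next
  case (insert x D)
  define U where "U = V \<union> D"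
  have U: "finite U" "x \<notin> U" and xV: "x \<notin> V" unfolding U_def using V insert by auto
  define g where "g S = p ^ card S * (1 - p) ^ (card (insert x U) - card S) * f (S \<inter> V)" for S
  \<comment> \<open>Each subset of U pairs with its extension by x; the two weights add up to the weight over U.\<close>
  have pair: "g S + g (insert x S) = p ^ card S * (1 - p) ^ (card U - card S) * f (S \<inter> V)"
    if "S \<in> Pow U" for S
  proof -
    have "finite S" "x \<notin> S" "card S \<le> card U" using that U finite_subset card_mono by auto
    then have "card (insert x U) - card S = Suc (card U - card S)"
      and "card (insert x S) = Suc (card S)"
      and "card (insert x U) - card (insert x S) = card U - card S"
      and "insert x S \<inter> V = S \<inter> V"
      using U xV by auto
    then show ?thesis unfolding g_def by (simp add: algebra_simps)
  qed
  have "inj_on (insert x) (Pow U)" using U(2) by (auto simp: inj_on_def insert_ident)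
  moreover have "Pow U \<inter> insert x ` Pow U = {}" using U(2) by auto
  ultimately have "(\<Sum>S\<in>Pow (insert x U). g S) = (\<Sum>S\<in>Pow U. g S + g (insert x S))"
    unfolding Pow_insert sum.distrib using U by (simp add: sum.union_disjoint sum.reindex)
  also have "\<dots> = (\<Sum>S\<in>Pow U. p ^ card S * (1 - p) ^ (card U - card S) * f (S \<inter> V))"
    using pair by (rule sum.cong[OF refl])
  finally show ?case using insert unfolding U_def g_def by simp
qed

lemma ungar_prob_tail_forest:
  assumes P: "parent_fun (N + d) P"
  shows "ungar_prob (N + d) p P (\<lambda>F'. Q (tail_forest d N F')) = ungar_prob N p (tail_forest d N P) Q"
proof -
  define V where "V = {Suc d..N + d}"
  define k where "k U = (if Q (ungar_apply N ((\<lambda>x. x - d) ` U) (tail_forest d N P)) then 1 else 0 :: real)"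
    for U
  have split: "{1..N + d} = V \<union> {1..d}" and "V \<inter> {1..d} = {}" unfolding V_def by auto
  have "ungar_prob (N + d) p P (\<lambda>F'. Q (tail_forest d N F')) =
      (\<Sum>S\<in>Pow (V \<union> {1..d}). p ^ card S * (1 - p) ^ (card (V \<union> {1..d}) - card S) * k (S \<inter> V))"
  proof -
    have "{x\<in>S. d < x} = S \<inter> V" if "S \<subseteq> {1..N + d}" for S
      using that unfolding V_def by auto
    then show ?thesis
      unfolding ungar_prob_def k_def split[symmetric]
      by (intro sum.cong) (auto simp: tail_forest_ungar_apply[OF P])
  qed
  also have "\<dots> = (\<Sum>U\<in>Pow V. p ^ card U * (1 - p) ^ (N - card U) * k U)"
  proof -
    have "finite V" "card V = N" unfolding V_def by auto
    then show ?thesis using sum_Pow_Un_marginal[of V "{1..d}" p k] \<open>V \<inter> {1..d} = {}\<close> by simp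
  qed
  also have "\<dots> = (\<Sum>T\<in>Pow {1..N}. p ^ card T * (1 - p) ^ (N - card T) * k ((\<lambda>x. x + d) ` T))"
  proof -
    have "inj_on (image (\<lambda>x. x + d)) (Pow {1..N})" by (rule inj_on_image_Pow) simp
    moreover have "Pow V = image (\<lambda>x. x + d) ` Pow {1..N}"
      unfolding V_def by (rule image_Pow_surj[symmetric]) simp
    ultimately show ?thesis by (simp add: sum.reindex card_image)
  qed
  also have "\<dots> = ungar_prob N p (tail_forest d N P) Q"
    unfolding ungar_prob_def k_def by (simp add: image_image)
  finally show ?thesis .
qed

lemma of_iso_tail_forest:
  assumes P: "parent_fun (N + d) P"
  shows "of_iso {1..N} (tail_forest d N P) {Suc d..N + d} (induced P {Suc d..N + d}) (\<lambda>x. x + d)"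
  unfolding of_iso_def
proof (intro conjI ballI impI)
  show "bij_betw (\<lambda>x. x + d) {1..N} {Suc d..N + d}"
    by (rule bij_betw_byWitness[where f' = "\<lambda>x. x - d"]) auto
  fix v assume v: "v \<in> {1..N}"
  then have "P (v + d) < v + d" using parent_fun_less[OF P] by simp
  then show "induced P {Suc d..N + d} (v + d) =
      (if tail_forest d N P v = 0 then 0 else tail_forest d N P v + d)"
    using v unfolding induced_def tail_forest_def by auto
qed simp

lemma of_iso_tail_forest_inv:
  assumes P: "parent_fun (N + d) P"
  shows "of_iso {Suc d..N + d} (induced P {Suc d..N + d}) {1..N} (tail_forest d N P) (\<lambda>x. x - d)"
  unfolding of_iso_def
proof (intro conjI ballI impI)
  show "bij_betw (\<lambda>x. x - d) {Suc d..N + d} {1..N}"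
    by (rule bij_betw_byWitness[where f' = "\<lambda>x. x + d"]) auto
  fix v assume v: "v \<in> {Suc d..N + d}"
  then have "P v < v" using parent_fun_less[OF P] by simp
  then show "tail_forest d N P (v - d) =
      (if induced P {Suc d..N + d} v = 0 then 0 else induced P {Suc d..N + d} v - d)"
    using v unfolding induced_def tail_forest_def by auto
qed auto

lemma of_iso_trans:
  assumes I1: "of_iso V A W B \<phi>" and I2: "of_iso W B X C \<psi>" and W: "0 \<notin> W"
    and A: "\<forall>v\<in>V. A v \<noteq> 0 \<longrightarrow> A v \<in> V"
  shows "of_iso V A X C (\<psi> \<circ> \<phi>)"
proof -
  have b1: "bij_betw \<phi> V W"
    and p1: "\<And>v. v \<in> V \<Longrightarrow> B (\<phi> v) = (if A v = 0 then 0 else \<phi> (A v))"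
    and o1: "\<And>u v. u \<in> V \<Longrightarrow> v \<in> V \<Longrightarrow> A u = A v \<Longrightarrow> u < v \<Longrightarrow> \<phi> u < \<phi> v"
    using I1 unfolding of_iso_def by blast+
  have b2: "bij_betw \<psi> W X"
    and p2: "\<And>v. v \<in> W \<Longrightarrow> C (\<psi> v) = (if B v = 0 then 0 else \<psi> (B v))"
    and o2: "\<And>u v. u \<in> W \<Longrightarrow> v \<in> W \<Longrightarrow> B u = B v \<Longrightarrow> u < v \<Longrightarrow> \<psi> u < \<psi> v"
    using I2 unfolding of_iso_def by blast+
  have \<phi>W: "\<phi> v \<in> W" if "v \<in> V" for v using b1 bij_betwE that by blast
  show ?thesis unfolding of_iso_def
  proof (intro conjI ballI impI)
    show "bij_betw (\<psi> \<circ> \<phi>) V X" using bij_betw_trans[OF b1 b2] .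
  next
    fix v assume v: "v \<in> V"
    show "C ((\<psi> \<circ> \<phi>) v) = (if A v = 0 then 0 else (\<psi> \<circ> \<phi>) (A v))"
    proof (cases "A v = 0")
      case False
      then have "\<phi> (A v) \<noteq> 0" using A v \<phi>W W by metis
      then show ?thesis using p2[OF \<phi>W[OF v]] p1[OF v] False by simp
    qed (use p2[OF \<phi>W[OF v]] p1[OF v] in simp)
  next
    fix u v assume u: "u \<in> V" and v: "v \<in> V" and uv: "A u = A v \<and> u < v"
    then have "B (\<phi> u) = B (\<phi> v)" using p1 by simp
    then show "(\<psi> \<circ> \<phi>) u < (\<psi> \<circ> \<phi>) v" using o2[OF \<phi>W[OF u] \<phi>W[OF v]] o1[OF u v] uv by simp
  qed
qed

lemma of_iso_induced_iff_tail_forest: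
  assumes P: "P \<in> ford (N + d)" and G: "G \<in> ford N"
  shows "(\<exists>\<phi>. of_iso {Suc d..N + d} (induced P {Suc d..N + d}) {1..N} G \<phi>) \<longleftrightarrow>
         tail_forest d N P = G"
proof
  have par: "parent_fun (N + d) P" using ford_parent_fun[OF P] .
  assume "\<exists>\<phi>. of_iso {Suc d..N + d} (induced P {Suc d..N + d}) {1..N} G \<phi>"
  then obtain \<phi> where \<phi>: "of_iso {Suc d..N + d} (induced P {Suc d..N + d}) {1..N} G \<phi>" by blast
  have "\<forall>v\<in>{1..N}. tail_forest d N P v \<noteq> 0 \<longrightarrow> tail_forest d N P v \<in> {1..N}"
    using parent_fun_less[OF parent_fun_tail_forest[OF par]] by fastforce
  then have "of_iso {1..N} (tail_forest d N P) {1..N} G (\<phi> \<circ> (\<lambda>x. x + d))"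
    by (intro of_iso_trans[OF of_iso_tail_forest[OF par] \<phi>]) simp_all
  then show "tail_forest d N P = G" by (rule of_iso_ford_eq[OF tail_forest_ford[OF P] G])
next
  assume "tail_forest d N P = G"
  then show "\<exists>\<phi>. of_iso {Suc d..N + d} (induced P {Suc d..N + d}) {1..N} G \<phi>"
    using of_iso_tail_forest_inv[OF ford_parent_fun[OF P]] by (intro exI) simp
qed

lemma ungar_prob_cong:
  assumes "\<And>S. S \<subseteq> {1..N} \<Longrightarrow> Q (ungar_apply N S P) \<longleftrightarrow> Q' (ungar_apply N S P)"
  shows "ungar_prob N p P Q = ungar_prob N p P Q'"
  unfolding ungar_prob_def using assms by (intro sum.cong) auto

lemma ungar_prob_induced_iso:
  assumes F: "F \<in> ford (N + d)" and G: "G \<in> ford N" and G': "G' \<in> ford N"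
    and iso: "\<exists>\<phi>. of_iso {Suc d..N + d} (induced F {Suc d..N + d}) {1..N} G \<phi>"
  shows "ungar_prob (N + d) p F
           (\<lambda>F'. \<exists>\<phi>. of_iso {Suc d..N + d} (induced F' {Suc d..N + d}) {1..N} G' \<phi>)
         = ungar_prob N p G (\<lambda>H. H = G')"
proof -
  have "ungar_prob (N + d) p F
           (\<lambda>F'. \<exists>\<phi>. of_iso {Suc d..N + d} (induced F' {Suc d..N + d}) {1..N} G' \<phi>)
      = ungar_prob (N + d) p F (\<lambda>F'. tail_forest d N F' = G')"
    using of_iso_induced_iff_tail_forest[OF ungar_apply_ford[OF F] G'] by (intro ungar_prob_cong)
  also have "\<dots> = ungar_prob N p (tail_forest d N F) (\<lambda>H. H = G')"
    using ungar_prob_tail_forest[OF ford_parent_fun[OF F]] .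
  finally show ?thesis using iso of_iso_induced_iff_tail_forest[OF F G] by simp
qed

theorem proposition4p9:
  shows "(\<forall>n. \<forall>F\<in>ford n. \<forall>v\<in>{1..n}.
            \<exists>b. {u\<in>{1..n}. \<exists>j. (F ^^ j) u = v} = {v..b})
       \<and> (\<forall>n (p::real) m F G G'.
            0 < p \<and> p \<le> 1 \<and> m \<in> {1..n} \<and> F \<in> ford n \<and>
            G \<in> ford (n - m + 1) \<and>
            (\<exists>\<phi>. of_iso {m..n} (induced F {m..n}) {1..n - m + 1} G \<phi>) \<and>
            G' \<in> ford (n - m + 1) \<longrightarrow>
            ungar_prob n p F
              (\<lambda>F'. \<exists>\<phi>. of_iso {m..n} (induced F' {m..n}) {1..n - m + 1} G' \<phi>)
            = ungar_prob (n - m + 1) p G (\<lambda>H. H = G'))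
       \<and> (\<forall>n S k l.
            (\<forall>t\<ge>1. S t \<subseteq> {1..n}) \<and> k \<in> {1..n} \<and> l \<in> {1..n} \<and> k < l \<and>
            (\<forall>i\<in>{k..l}. \<exists>t\<ge>1. i \<in> S t) \<and>
            hit S l < hit S k \<and>
            (\<forall>i\<in>{k+1..l-1}. hit S i \<le> hit S l) \<longrightarrow>
            run n S (hit S l) l = k)"
proof (intro conjI allI ballI impI)
  fix n F v assume "F \<in> ford n" "v \<in> {1..n}"
  then show "\<exists>b. {u\<in>{1..n}. \<exists>j. (F ^^ j) u = v} = {v..b}"
    using descendants_interval unfolding desc_def by blast
next
  fix n m F G G' and p :: real
  assume asm: "0 < p \<and> p \<le> 1 \<and> m \<in> {1..n} \<and> F \<in> ford n \<and> G \<in> ford (n - m + 1) \<and>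
    (\<exists>\<phi>. of_iso {m..n} (induced F {m..n}) {1..n - m + 1} G \<phi>) \<and> G' \<in> ford (n - m + 1)"
  \<comment> \<open>The identity holds for every real p.\<close>
  define N where "N = n - m + 1"
  define d where "d = m - 1"
  have n: "n = N + d" and m: "m = Suc d" using asm unfolding N_def d_def by auto
  have "F \<in> ford (N + d)" "G \<in> ford N" "G' \<in> ford N"
    "\<exists>\<phi>. of_iso {Suc d..N + d} (induced F {Suc d..N + d}) {1..N} G \<phi>"
    using asm unfolding N_def[symmetric] unfolding n m by auto
  from ungar_prob_induced_iso[OF this, of p]
  show "ungar_prob n p F (\<lambda>F'. \<exists>\<phi>. of_iso {m..n} (induced F' {m..n}) {1..n - m + 1} G' \<phi>)
      = ungar_prob (n - m + 1) p G (\<lambda>H. H = G')"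
    unfolding N_def[symmetric] unfolding n m .
next
  fix n S k l
  assume "(\<forall>t\<ge>1. S t \<subseteq> {1..n}) \<and> k \<in> {1..n} \<and> l \<in> {1..n} \<and> k < l \<and>
    (\<forall>i\<in>{k..l}. \<exists>t\<ge>1. i \<in> S t) \<and> hit S l < hit S k \<and> (\<forall>i\<in>{k+1..l-1}. hit S i \<le> hit S l)"
  then show "run n S (hit S l) l = k" using run_hit_parent[of S n l k] by auto
qed

end
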